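(* For every $N\times N$ stochastic matrix $A$ and every $t\geq 1$, $$\mathbb E\|\hat{\boldsymbol\theta}_t-\theta\mathbf 1\|^2\leq \frac{N}{t}\,\mathbb E\|\mathbf X_1-\theta\mathbf 1\|^2 .$$ Consequently $\mathbb E\|\hat{\boldsymbol\theta}_t-\theta\mathbf 1\|^2\to 0$ as $t\to\infty$, and $\hat\theta^{(i)}_t\to\theta$ in probability for each $i\in\{1,\dots,N\}$.
   Context: Let $X$ be a square-integrable real random variable with $\mathbb E X=\theta$ and $\mathrm{Var}(X)=\sigma^2$. Fix an integer $N\geq 2$. For $i\in\{1,\dots,N\}$ and $t\geq 1$ let $X_t^{(i)}$ be random variables distributed as $X$, mutually independent over both $i$ and $t$, and write $\mathbf X_t=(X_t^{(1)},\dots,X_t^{(N)})^\top$. Let $A=(a_{ij})_{1\le i,j\le N}$ be a stochastic matrix ($a_{ij}\geq 0$ and every row sums to $1$). Define $\hat{\boldsymbol\theta}_1=\mathbf X_1$ and $\hat{\boldsymbol\theta}_{t+1}=\frac{t}{t+1}A\hat{\boldsymbol\theta}_t+\frac{1}{t+1}\mathbf X_{t+1}$ for $t\geq 1$, and write $\hat{\boldsymbol\theta}_t=(\hat\theta^{(1)}_t,\dots,\hat\theta^{(N)}_t)^\top$. Let $\mathbf 1=(1,\dots,1)^\top$ and $\|\cdot\|$ the Euclidean norm. *)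

theory Defs
  imports "HOL-Analysis.Analysis" "HOL-Probability.Probability"
begin

definition stochastic_matrix :: "real ^ 'n ^ 'n \<Rightarrow> bool" where
  "stochastic_matrix A \<longleftrightarrow>
     (\<forall>i j. 0 \<le> A $ i $ j) \<and> (\<forall>i. (\<Sum>j\<in>UNIV. A $ i $ j) = 1)"

definition obs_vec :: "(nat \<Rightarrow> 'n::finite \<Rightarrow> 'a \<Rightarrow> real) \<Rightarrow> nat \<Rightarrow> 'a \<Rightarrow> real ^ 'n" where
  "obs_vec X t \<omega> = (\<chi> i. X t i \<omega>)"

text \<open>est_aux A X k is the estimate at time k+1.\<close>
primrec est_aux :: "real ^ 'n ^ 'n \<Rightarrow> (nat \<Rightarrow> 'n::finite \<Rightarrow> 'a \<Rightarrow> real) \<Rightarrow> nat \<Rightarrow> 'a \<Rightarrow> real ^ 'n" where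
  "est_aux A X 0 \<omega> = obs_vec X 1 \<omega>"
| "est_aux A X (Suc k) \<omega> =
     (real (Suc k) / real (Suc (Suc k))) *\<^sub>R (A *v est_aux A X k \<omega>)
     + (1 / real (Suc (Suc k))) *\<^sub>R obs_vec X (Suc (Suc k)) \<omega>"

definition theta_hat :: "real ^ 'n ^ 'n \<Rightarrow> (nat \<Rightarrow> 'n::finite \<Rightarrow> 'a \<Rightarrow> real) \<Rightarrow> nat \<Rightarrow> 'a \<Rightarrow> real ^ 'n" where
  "theta_hat A X t = est_aux A X (t - 1)"

end

theory Submission
  imports Defs
begin

text \<open>Rescaling by \<open>t\<close> undoes the averaging: \<open>w\<^sub>t = t (\<theta>\<^sub>t - \<theta>\<one>)\<close>, with \<open>\<theta>\<^sub>t\<close> the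
  estimate, satisfies \<open>w\<^sub>1 = X\<^sub>1 - \<theta>\<one>\<close> and \<open>w\<^sub>t\<^sub>+\<^sub>1 = A w\<^sub>t + (X\<^sub>t\<^sub>+\<^sub>1 - \<theta>\<one>)\<close>. The fresh
  noise is centred and independent of the past, hence uncorrelated with \<open>A w\<^sub>t\<close>, so second
  moments add; and as every row of \<open>A\<close> is a probability vector, Jensen's inequality bounds
  the second moment of each component of \<open>A w\<^sub>t\<close> by the largest one of \<open>w\<^sub>t\<close>. By induction
  every component of \<open>w\<^sub>t\<close> has second moment at most \<open>t \<sigma>\<^sup>2\<close>, whence
  \<open>E \<parallel>\<theta>\<^sub>t - \<theta>\<one>\<parallel>\<^sup>2 \<le> N \<sigma>\<^sup>2 / t \<le> (N / t) E \<parallel>X\<^sub>1 - \<theta>\<one>\<parallel>\<^sup>2\<close>. Convergence in probability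
  then follows from Chebyshev's inequality.\<close>

lemma integrable_mult_of_square_integrable:
  fixes f g :: "'a \<Rightarrow> real"
  assumes [measurable]: "f \<in> borel_measurable M" "g \<in> borel_measurable M"
    and "integrable M (\<lambda>x. (f x)\<^sup>2)" "integrable M (\<lambda>x. (g x)\<^sup>2)"
  shows "integrable M (\<lambda>x. f x * g x)"
proof (rule Bochner_Integration.integrable_bound)
  show "integrable M (\<lambda>x. (f x)\<^sup>2 + (g x)\<^sup>2)"
    using assms by auto
  have "\<bar>f x * g x\<bar> \<le> (f x)\<^sup>2 + (g x)\<^sup>2" for x
  proof -
    have "2 * \<bar>f x\<bar> * \<bar>g x\<bar> \<le> (f x)\<^sup>2 + (g x)\<^sup>2"
      using sum_squares_bound[of "\<bar>f x\<bar>" "\<bar>g x\<bar>"] by simp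
    moreover have "0 \<le> \<bar>f x\<bar> * \<bar>g x\<bar>"
      by simp
    ultimately show ?thesis
      unfolding abs_mult by linarith
  qed
  then show "AE x in M. norm (f x * g x) \<le> norm ((f x)\<^sup>2 + (g x)\<^sup>2)"
    by simp
qed simp

lemma square_add_expand:
  fixes f g :: "'a \<Rightarrow> real"
  shows "(\<lambda>x. (f x + g x)\<^sup>2) = (\<lambda>x. (f x)\<^sup>2 + (g x)\<^sup>2 + 2 * (f x * g x))"
  by (simp add: fun_eq_iff power2_sum)

lemma square_integrable_add:
  fixes f g :: "'a \<Rightarrow> real"
  assumes "f \<in> borel_measurable M" "g \<in> borel_measurable M"
    and "integrable M (\<lambda>x. (f x)\<^sup>2)" "integrable M (\<lambda>x. (g x)\<^sup>2)"
  shows "integrable M (\<lambda>x. (f x + g x)\<^sup>2)"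
  unfolding square_add_expand
  using integrable_mult_of_square_integrable[OF assms] assms(3,4) by simp

lemma integral_square_add_uncorrelated:
  fixes f g :: "'a \<Rightarrow> real"
  assumes "f \<in> borel_measurable M" "g \<in> borel_measurable M"
    and "integrable M (\<lambda>x. (f x)\<^sup>2)" "integrable M (\<lambda>x. (g x)\<^sup>2)"
    and "(\<integral>x. f x * g x \<partial>M) = 0"
  shows "(\<integral>x. (f x + g x)\<^sup>2 \<partial>M) = (\<integral>x. (f x)\<^sup>2 \<partial>M) + (\<integral>x. (g x)\<^sup>2 \<partial>M)"
  unfolding square_add_expand
  using integrable_mult_of_square_integrable[OF assms(1-4)] assms(3-5) by simp

lemma square_integrable_sum:
  fixes F :: "'i \<Rightarrow> 'a \<Rightarrow> real"
  assumes "finite S"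
    and "\<And>j. j \<in> S \<Longrightarrow> F j \<in> borel_measurable M"
    and "\<And>j. j \<in> S \<Longrightarrow> integrable M (\<lambda>x. (F j x)\<^sup>2)"
  shows "integrable M (\<lambda>x. (\<Sum>j\<in>S. F j x)\<^sup>2)"
  using assms
proof (induction S rule: finite_induct)
  case (insert a S)
  then show ?case
    by (simp add: square_integrable_add borel_measurable_sum)
qed simp

lemma
  fixes h :: "'b \<Rightarrow> real"
  assumes "distr M N f = distr M N g" "f \<in> measurable M N" "g \<in> measurable M N"
    and "h \<in> borel_measurable N"
  shows identical_distr_integrable_iff: "integrable M (\<lambda>x. h (f x)) \<longleftrightarrow> integrable M (\<lambda>x. h (g x))"
    and identical_distr_integral_eq: "(\<integral>x. h (f x) \<partial>M) = (\<integral>x. h (g x) \<partial>M)"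
  using integrable_distr_eq[OF assms(2,4)] integrable_distr_eq[OF assms(3,4)]
    integral_distr[OF assms(2,4)] integral_distr[OF assms(3,4)] assms(1)
  by simp_all

lemma (in prob_space) indep_vars_expectation_mult_centered:
  fixes F :: "'i \<Rightarrow> 'a \<Rightarrow> real"
  assumes "indep_vars (\<lambda>_. borel) F I" "p \<in> I" "q \<in> I" "p \<noteq> q"
    and "integrable M (F p)" "integrable M (F q)" "expectation (F p) = 0"
  shows "expectation (\<lambda>\<omega>. F p \<omega> * F q \<omega>) = 0"
proof -
  have "indep_vars (\<lambda>_. borel) F {p, q}"
    using assms(1) by (rule indep_vars_subset) (use assms(2,3) in auto)
  then have "expectation (\<lambda>\<omega>. \<Prod>r\<in>{p, q}. F r \<omega>) = (\<Prod>r\<in>{p, q}. expectation (F r))"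
    by (intro indep_vars_lebesgue_integral) (use assms(5,6) in auto)
  then show ?thesis
    using assms(4,7) by simp
qed

lemma stochastic_matrix_mult_const:
  assumes "stochastic_matrix A"
  shows "A *v (\<chi> i. c) = (\<chi> i. c)"
  using assms by (simp add: stochastic_matrix_def matrix_vector_mult_def vec_eq_iff
      flip: sum_distrib_right)

lemma stochastic_matrix_mult_square_le:
  assumes "stochastic_matrix A"
  shows "((A *v v) $ i)\<^sup>2 \<le> (\<Sum>j\<in>UNIV. A $ i $ j * (v $ j)\<^sup>2)"
  using convex_on_sum[OF _ _ convex_power2, of UNIV "\<lambda>j. A $ i $ j" "\<lambda>j. v $ j"] assms
  by (simp add: stochastic_matrix_def matrix_vector_mult_def)

lemma borel_measurable_matrix_vector_mult_component:
  fixes f :: "'a \<Rightarrow> real ^ 'n"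
  assumes "\<And>j. (\<lambda>x. f x $ j) \<in> borel_measurable M"
  shows "(\<lambda>x. (A *v f x) $ i) \<in> borel_measurable M"
  using assms by (auto simp: matrix_vector_mult_def intro!: borel_measurable_sum borel_measurable_times)

lemma square_integrable_matrix_vector_mult_component:
  fixes f :: "'a \<Rightarrow> real ^ 'n"
  assumes "\<And>j. (\<lambda>x. f x $ j) \<in> borel_measurable M"
    and "\<And>j. integrable M (\<lambda>x. (f x $ j)\<^sup>2)"
  shows "integrable M (\<lambda>x. ((A *v f x) $ i)\<^sup>2)"
proof -
  have "integrable M (\<lambda>x. (\<Sum>j\<in>UNIV. A $ i $ j * f x $ j)\<^sup>2)"
    by (rule square_integrable_sum) (auto simp: assms power_mult_distrib intro!: borel_measurable_times)
  then show ?thesis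
    by (simp add: matrix_vector_mult_def)
qed

lemma integral_matrix_vector_mult_component_times:
  fixes f :: "'a \<Rightarrow> real ^ 'n" and g :: "'a \<Rightarrow> real"
  assumes "\<And>j. (\<lambda>x. f x $ j) \<in> borel_measurable M"
    and "\<And>j. integrable M (\<lambda>x. (f x $ j)\<^sup>2)"
    and "g \<in> borel_measurable M" "integrable M (\<lambda>x. (g x)\<^sup>2)"
  shows "(\<integral>x. (A *v f x) $ i * g x \<partial>M) = (\<Sum>j\<in>UNIV. A $ i $ j * (\<integral>x. f x $ j * g x \<partial>M))"
proof -
  have "integrable M (\<lambda>x. f x $ j * g x)" for j
    by (rule integrable_mult_of_square_integrable) (use assms in auto)
  then show ?thesis
    by (simp add: matrix_vector_mult_def sum_distrib_right mult.assoc)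
qed

lemma integral_square_matrix_vector_mult_le:
  fixes f :: "'a \<Rightarrow> real ^ 'n"
  assumes A: "stochastic_matrix A"
    and f: "\<And>j. (\<lambda>x. f x $ j) \<in> borel_measurable M" "\<And>j. integrable M (\<lambda>x. (f x $ j)\<^sup>2)"
    and bound: "\<And>j. (\<integral>x. (f x $ j)\<^sup>2 \<partial>M) \<le> c"
  shows "(\<integral>x. ((A *v f x) $ i)\<^sup>2 \<partial>M) \<le> c"
proof -
  have "(\<integral>x. ((A *v f x) $ i)\<^sup>2 \<partial>M) \<le> (\<integral>x. (\<Sum>j\<in>UNIV. A $ i $ j * (f x $ j)\<^sup>2) \<partial>M)"
    using f by (intro integral_mono stochastic_matrix_mult_square_le[OF A]
        square_integrable_matrix_vector_mult_component) auto
  also have "\<dots> = (\<Sum>j\<in>UNIV. A $ i $ j * (\<integral>x. (f x $ j)\<^sup>2 \<partial>M))"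
    using f(2) by simp
  also have "\<dots> \<le> (\<Sum>j\<in>UNIV. A $ i $ j * c)"
    using A bound by (intro sum_mono mult_left_mono) (simp_all add: stochastic_matrix_def)
  also have "\<dots> = c"
    using A by (simp add: stochastic_matrix_def flip: sum_distrib_right)
  finally show ?thesis .
qed

lemma integral_norm_square_vec:
  fixes f :: "'a \<Rightarrow> real ^ 'n"
  assumes "\<And>i. integrable M (\<lambda>x. (f x $ i)\<^sup>2)"
  shows "(\<integral>x. (norm (f x))\<^sup>2 \<partial>M) = (\<Sum>i\<in>UNIV. \<integral>x. (f x $ i)\<^sup>2 \<partial>M)"
proof -
  have "(norm v)\<^sup>2 = (\<Sum>i\<in>UNIV. (v $ i)\<^sup>2)" for v :: "real ^ 'n"
    unfolding power2_norm_eq_inner by (simp add: inner_vec_def power2_eq_square)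
  then show ?thesis
    using assms by simp
qed

section \<open>The propagated noise of the consensus recursion\<close>

text \<open>\<open>propagated_noise A Z k = \<Sum>s\<le>k+1. A\<^bsup>k+1-s\<^esup> Z\<^sub>s\<close>; with \<open>Z\<^sub>s = X\<^sub>s - \<theta>\<close> it is the
  error of \<open>theta_hat A X (k + 1)\<close> multiplied by \<open>k + 1\<close>.\<close>
primrec propagated_noise ::
    "real ^ 'n ^ 'n \<Rightarrow> (nat \<Rightarrow> 'n::finite \<Rightarrow> 'a \<Rightarrow> real) \<Rightarrow> nat \<Rightarrow> 'a \<Rightarrow> real ^ 'n" where
  "propagated_noise A Z 0 \<omega> = obs_vec Z 1 \<omega>"
| "propagated_noise A Z (Suc k) \<omega> = A *v propagated_noise A Z k \<omega> + obs_vec Z (Suc (Suc k)) \<omega>"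

lemma est_aux_error_eq:
  assumes "stochastic_matrix A"
  shows "real (Suc k) *\<^sub>R (est_aux A X k \<omega> - (\<chi> i. \<theta>))
    = propagated_noise A (\<lambda>s i \<omega>. X s i \<omega> - \<theta>) k \<omega>"
proof (induction k)
  case 0
  then show ?case
    by (simp add: obs_vec_def vec_eq_iff)
next
  case (Suc k)
  let ?c = "\<chi> i. \<theta>" and ?e = "est_aux A X k \<omega>" and ?x = "obs_vec X (Suc (Suc k)) \<omega>"
  have "real (Suc (Suc k)) *\<^sub>R (est_aux A X (Suc k) \<omega> - ?c)
      = real (Suc k) *\<^sub>R (A *v ?e) + ?x - real (Suc (Suc k)) *\<^sub>R ?c"
    by (simp add: algebra_simps del: of_nat_Suc)
  also have "\<dots> = A *v (real (Suc k) *\<^sub>R (?e - ?c)) + (?x - ?c)"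
    using stochastic_matrix_mult_const[OF assms]
    by (simp add: matrix_vector_mult_diff_distrib matrix_vector_mult_scaleR vec_eq_iff algebra_simps)
  finally show ?case
    using Suc by (simp add: obs_vec_def vec_eq_iff del: of_nat_Suc)
qed

text \<open>The independence and identical distribution of the observations enter the error
  bound only through these second-order properties of the centred observations.\<close>
locale orthogonal_noise = prob_space M for M :: "'a measure" +
  fixes Z :: "nat \<Rightarrow> 'n::finite \<Rightarrow> 'a \<Rightarrow> real" and V :: real
  assumes noise_measurable: "1 \<le> s \<Longrightarrow> Z s i \<in> borel_measurable M"
    and noise_square_integrable: "1 \<le> s \<Longrightarrow> integrable M (\<lambda>\<omega>. (Z s i \<omega>)\<^sup>2)"
    and noise_second_moment: "1 \<le> s \<Longrightarrow> expectation (\<lambda>\<omega>. (Z s i \<omega>)\<^sup>2) = V"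
    and noise_orthogonal: "1 \<le> s \<Longrightarrow> 1 \<le> s' \<Longrightarrow> (s, i) \<noteq> (s', j) \<Longrightarrow>
      expectation (\<lambda>\<omega>. Z s i \<omega> * Z s' j \<omega>) = 0"
begin

lemma second_moment_nonneg: "0 \<le> V"
  using noise_second_moment[of 1 undefined, symmetric] by simp

lemma propagated_noise_measurable [measurable]:
  "(\<lambda>\<omega>. propagated_noise A Z k \<omega> $ i) \<in> borel_measurable M"
proof (induction k arbitrary: i)
  case 0
  then show ?case
    by (simp add: obs_vec_def noise_measurable)
next
  case (Suc k)
  then show ?case
    by (auto simp: obs_vec_def intro!: borel_measurable_add noise_measurable
        borel_measurable_matrix_vector_mult_component)
qed

lemma propagated_noise_square_integrable:
  "integrable M (\<lambda>\<omega>. (propagated_noise A Z k \<omega> $ i)\<^sup>2)"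
proof (induction k arbitrary: i)
  case 0
  then show ?case
    by (simp add: obs_vec_def noise_square_integrable)
next
  case (Suc k)
  then show ?case
    by (simp add: obs_vec_def square_integrable_add noise_measurable noise_square_integrable
        propagated_noise_measurable borel_measurable_matrix_vector_mult_component
        square_integrable_matrix_vector_mult_component)
qed

lemma propagated_noise_orthogonal:
  assumes "Suc k < s"
  shows "expectation (\<lambda>\<omega>. propagated_noise A Z k \<omega> $ i * Z s j \<omega>) = 0"
  using assms
proof (induction k arbitrary: i s)
  case 0
  then show ?case
    by (simp add: obs_vec_def noise_orthogonal)
next
  case (Suc k)
  have s: "1 \<le> s"
    using Suc.prems by simp
  have "expectation (\<lambda>\<omega>. propagated_noise A Z (Suc k) \<omega> $ i * Z s j \<omega>)
      = expectation (\<lambda>\<omega>. (A *v propagated_noise A Z k \<omega>) $ i * Z s j \<omega>)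
        + expectation (\<lambda>\<omega>. Z (Suc (Suc k)) i \<omega> * Z s j \<omega>)"
    by (simp add: obs_vec_def distrib_right,
        intro Bochner_Integration.integral_add integrable_mult_of_square_integrable
          borel_measurable_matrix_vector_mult_component square_integrable_matrix_vector_mult_component
          propagated_noise_measurable propagated_noise_square_integrable
          noise_measurable noise_square_integrable)
      (use Suc.prems in simp_all)
  also have "\<dots> = 0"
    using Suc s by (simp add: integral_matrix_vector_mult_component_times noise_measurable
        noise_square_integrable propagated_noise_measurable propagated_noise_square_integrable
        noise_orthogonal)
  finally show ?case .
qed

lemma propagated_noise_second_moment:
  assumes A: "stochastic_matrix A"
  shows "expectation (\<lambda>\<omega>. (propagated_noise A Z k \<omega> $ i)\<^sup>2) \<le> real (Suc k) * V"
proof (induction k arbitrary: i)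
  case 0
  then show ?case
    by (simp add: obs_vec_def noise_second_moment)
next
  case (Suc k)
  let ?W = "propagated_noise A Z k" and ?Z = "Z (Suc (Suc k)) i"
  have W: "\<And>j. (\<lambda>\<omega>. ?W \<omega> $ j) \<in> borel_measurable M" "\<And>j. integrable M (\<lambda>\<omega>. (?W \<omega> $ j)\<^sup>2)"
    by (rule propagated_noise_measurable propagated_noise_square_integrable)+
  have Z: "?Z \<in> borel_measurable M" "integrable M (\<lambda>\<omega>. (?Z \<omega>)\<^sup>2)"
    by (simp_all add: noise_measurable noise_square_integrable)
  have "expectation (\<lambda>\<omega>. (A *v ?W \<omega>) $ i * ?Z \<omega>) = 0"
    using integral_matrix_vector_mult_component_times[OF W Z]
    by (simp add: propagated_noise_orthogonal)
  then have "expectation (\<lambda>\<omega>. (propagated_noise A Z (Suc k) \<omega> $ i)\<^sup>2)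
      = expectation (\<lambda>\<omega>. ((A *v ?W \<omega>) $ i)\<^sup>2) + expectation (\<lambda>\<omega>. (?Z \<omega>)\<^sup>2)"
    unfolding propagated_noise.simps using W Z
    by (simp add: obs_vec_def integral_square_add_uncorrelated
        borel_measurable_matrix_vector_mult_component square_integrable_matrix_vector_mult_component)
  also have "\<dots> \<le> real (Suc k) * V + V"
    using integral_square_matrix_vector_mult_le[OF A W Suc.IH] noise_second_moment[of "Suc (Suc k)" i]
    by simp
  finally show ?case
    by (simp add: algebra_simps)
qed

lemma propagated_noise_mean_square:
  assumes "stochastic_matrix A"
  shows "expectation (\<lambda>\<omega>. (norm (propagated_noise A Z k \<omega>))\<^sup>2) \<le> CARD('n) * (real (Suc k) * V)"
proof -
  have "expectation (\<lambda>\<omega>. (norm (propagated_noise A Z k \<omega>))\<^sup>2)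
      = (\<Sum>i\<in>UNIV. expectation (\<lambda>\<omega>. (propagated_noise A Z k \<omega> $ i)\<^sup>2))"
    by (simp add: integral_norm_square_vec propagated_noise_square_integrable)
  also have "\<dots> \<le> (\<Sum>i\<in>(UNIV :: 'n set). real (Suc k) * V)"
    by (intro sum_mono propagated_noise_second_moment assms)
  finally show ?thesis
    by simp
qed

lemma obs_vec_mean_square:
  assumes "1 \<le> s"
  shows "expectation (\<lambda>\<omega>. (norm (obs_vec Z s \<omega>))\<^sup>2) = CARD('n) * V"
  using assms by (simp add: integral_norm_square_vec obs_vec_def noise_square_integrable
      noise_second_moment)

lemma propagated_noise_deviation:
  assumes "stochastic_matrix A" "0 < \<epsilon>"
  shows "measure M {\<omega> \<in> space M. \<epsilon> < \<bar>propagated_noise A Z k \<omega> $ i\<bar> / real (Suc k)}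
    \<le> V / (\<epsilon>\<^sup>2 * real (Suc k))"
proof -
  define f where "f \<omega> = propagated_noise A Z k \<omega> $ i / real (Suc k)" for \<omega>
  have f: "f \<in> borel_measurable M" "integrable M (\<lambda>\<omega>. (f \<omega>)\<^sup>2)"
    unfolding f_def
    by measurable (simp add: propagated_noise_square_integrable power_divide)
  have "measure M {\<omega> \<in> space M. \<epsilon> < \<bar>f \<omega>\<bar>} \<le> measure M {\<omega> \<in> space M. \<epsilon> \<le> \<bar>f \<omega>\<bar>}"
    using f(1) by (intro finite_measure_mono) auto
  also have "\<dots> \<le> expectation (\<lambda>\<omega>. (f \<omega>)\<^sup>2) / \<epsilon>\<^sup>2"
    using f assms(2) by (intro second_moment_method) auto
  also have "\<dots> = expectation (\<lambda>\<omega>. (propagated_noise A Z k \<omega> $ i)\<^sup>2) / (\<epsilon>\<^sup>2 * (real (Suc k))\<^sup>2)"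
    by (simp add: f_def power_divide)
  also have "\<dots> \<le> real (Suc k) * V / (\<epsilon>\<^sup>2 * (real (Suc k))\<^sup>2)"
    by (intro divide_right_mono propagated_noise_second_moment assms(1)) simp
  also have "\<dots> = V / (\<epsilon>\<^sup>2 * real (Suc k))"
    by (simp add: power2_eq_square)
  finally show ?thesis
    by (simp add: f_def)
qed

end

lemma iid_centered_orthogonal_noise:
  fixes X :: "nat \<Rightarrow> 'n::finite \<Rightarrow> 'a \<Rightarrow> real"
  assumes "prob_space M"
    and Y: "Y \<in> borel_measurable M" "integrable M (\<lambda>\<omega>. (Y \<omega>)\<^sup>2)"
    and indep: "prob_space.indep_vars M (\<lambda>_. borel) (\<lambda>(t, i). X t i) ({1..} \<times> UNIV)"
    and distr: "\<And>t i. 1 \<le> t \<Longrightarrow> distr M borel (X t i) = distr M borel Y"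
  shows "orthogonal_noise M (\<lambda>t i \<omega>. X t i \<omega> - prob_space.expectation M Y) (prob_space.variance M Y)"
proof -
  interpret prob_space M by fact
  define \<theta> where "\<theta> = expectation Y"
  have X: "X t i \<in> borel_measurable M" if "1 \<le> t" for t i
    using bspec[OF conjunct1[OF indep[unfolded indep_vars_def]], of "(t, i)"] that by simp
  have same_distr: "integrable M (\<lambda>\<omega>. h (X t i \<omega>)) \<longleftrightarrow> integrable M (\<lambda>\<omega>. h (Y \<omega>))"
    "(\<integral>\<omega>. h (X t i \<omega>) \<partial>M) = (\<integral>\<omega>. h (Y \<omega>) \<partial>M)"
    if "1 \<le> t" "h \<in> borel_measurable borel" for t i and h :: "real \<Rightarrow> real"
    using identical_distr_integrable_iff[OF distr X Y(1) that(2)]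
      identical_distr_integral_eq[OF distr X Y(1) that(2)] that(1) by auto
  have centering: "(\<lambda>x. x - \<theta>) \<in> borel_measurable borel" "(\<lambda>x. (x - \<theta>)\<^sup>2) \<in> borel_measurable borel"
    by simp_all
  have "integrable M Y"
    by (rule square_integrable_imp_integrable[OF Y])
  have "(\<lambda>\<omega>. (Y \<omega> - \<theta>)\<^sup>2) = (\<lambda>\<omega>. (Y \<omega>)\<^sup>2 - 2 * \<theta> * Y \<omega> + \<theta>\<^sup>2)"
    by (simp add: fun_eq_iff power2_diff algebra_simps)
  then have Y_centered: "integrable M (\<lambda>\<omega>. (Y \<omega> - \<theta>)\<^sup>2)"
    using Y(2) \<open>integrable M Y\<close> by simp
  have X_centered: "integrable M (\<lambda>\<omega>. X t i \<omega> - \<theta>)" "expectation (\<lambda>\<omega>. X t i \<omega> - \<theta>) = 0"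
    if "1 \<le> t" for t i
    using same_distr[OF that centering(1)] \<open>integrable M Y\<close>
    by (simp_all add: \<theta>_def prob_space)
  have X_indep: "indep_vars (\<lambda>_. borel) (\<lambda>(t, i) \<omega>. X t i \<omega> - \<theta>) ({1..} \<times> UNIV)"
    using indep_vars_compose2[OF indep, of "\<lambda>_ x. x - \<theta>" "\<lambda>_. borel"]
    by (simp add: case_prod_beta')
  show ?thesis
    unfolding \<theta>_def[symmetric]
  proof unfold_locales
    fix s s' :: nat and i j :: 'n
    assume s: "1 \<le> s"
    show "(\<lambda>\<omega>. X s i \<omega> - \<theta>) \<in> borel_measurable M"
      using X[OF s] by simp
    show "integrable M (\<lambda>\<omega>. (X s i \<omega> - \<theta>)\<^sup>2)"
      "expectation (\<lambda>\<omega>. (X s i \<omega> - \<theta>)\<^sup>2) = expectation (\<lambda>\<omega>. (Y \<omega> - \<theta>)\<^sup>2)"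
      using same_distr[OF s centering(2)] Y_centered by (simp_all add: \<theta>_def)
    assume "1 \<le> s'" "(s, i) \<noteq> (s', j)"
    then show "expectation (\<lambda>\<omega>. (X s i \<omega> - \<theta>) * (X s' j \<omega> - \<theta>)) = 0"
      using indep_vars_expectation_mult_centered[OF X_indep, of "(s, i)" "(s', j)"] X_centered s
      by simp
  qed
qed

section \<open>Mean-square error of the consensus estimator\<close>

locale consensus_estimator = orthogonal_noise M "\<lambda>s i \<omega>. X s i \<omega> - \<theta>" V
  for M :: "'a measure" and X :: "nat \<Rightarrow> 'n::finite \<Rightarrow> 'a \<Rightarrow> real" and \<theta> V +
  fixes A :: "real ^ 'n ^ 'n"
  assumes stochastic: "stochastic_matrix A"
begin

lemma theta_hat_error_eq:
  assumes "1 \<le> t"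
  shows "theta_hat A X t \<omega> - (\<chi> i. \<theta>)
    = (1 / real t) *\<^sub>R propagated_noise A (\<lambda>s i \<omega>. X s i \<omega> - \<theta>) (t - 1) \<omega>"
proof -
  obtain k where t: "t = Suc k"
    using assms by (cases t) auto
  show ?thesis
    unfolding t theta_hat_def est_aux_error_eq[OF stochastic, symmetric] by simp
qed

lemma theta_hat_mean_square:
  assumes "1 \<le> t"
  shows "expectation (\<lambda>\<omega>. (norm (theta_hat A X t \<omega> - (\<chi> i. \<theta>)))\<^sup>2) \<le> CARD('n) * V / t"
proof -
  let ?W = "propagated_noise A (\<lambda>s i \<omega>. X s i \<omega> - \<theta>) (t - 1)"
  have "expectation (\<lambda>\<omega>. (norm (theta_hat A X t \<omega> - (\<chi> i. \<theta>)))\<^sup>2)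
      = expectation (\<lambda>\<omega>. (norm (?W \<omega>))\<^sup>2) / (real t)\<^sup>2"
    using assms by (simp add: theta_hat_error_eq power_divide)
  also have "\<dots> \<le> CARD('n) * (real t * V) / (real t)\<^sup>2"
    using propagated_noise_mean_square[OF stochastic, of "t - 1"] assms
    by (intro divide_right_mono) simp_all
  also have "\<dots> = CARD('n) * V / t"
    by (simp add: power2_eq_square)
  finally show ?thesis .
qed

lemma obs_vec_centered_mean_square:
  "expectation (\<lambda>\<omega>. (norm (obs_vec X 1 \<omega> - (\<chi> i. \<theta>)))\<^sup>2) = CARD('n) * V"
proof -
  have "obs_vec X 1 \<omega> - (\<chi> i. \<theta>) = obs_vec (\<lambda>s i \<omega>. X s i \<omega> - \<theta>) 1 \<omega>" for \<omega>
    by (simp add: obs_vec_def vec_eq_iff)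
  then show ?thesis
    using obs_vec_mean_square[of 1] by simp
qed

lemma theta_hat_deviation:
  assumes "1 \<le> t" "0 < \<epsilon>"
  shows "measure M {\<omega> \<in> space M. \<epsilon> < \<bar>theta_hat A X t \<omega> $ i - \<theta>\<bar>} \<le> V / (\<epsilon>\<^sup>2 * t)"
  using propagated_noise_deviation[OF stochastic assms(2), of "t - 1" i] assms(1)
    theta_hat_error_eq[OF assms(1)]
  by (simp add: vec_eq_iff abs_divide)

end

lemma tendsto_zero_of_le_const_over_n:
  fixes f :: "nat \<Rightarrow> real"
  assumes "\<And>t. 1 \<le> t \<Longrightarrow> 0 \<le> f t" "\<And>t. 1 \<le> t \<Longrightarrow> f t \<le> c / real t"
  shows "f \<longlonglongrightarrow> 0"
  by (rule tendsto_sandwich[of "\<lambda>_. 0" _ _ "\<lambda>t. c / real t"])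
    (auto intro: eventually_sequentiallyI assms lim_const_over_n)

theorem mainTheorem3:
  fixes M :: "'a measure"
    and Y :: "'a \<Rightarrow> real"
    and X :: "nat \<Rightarrow> 'n::finite \<Rightarrow> 'a \<Rightarrow> real"
    and A :: "real ^ 'n ^ 'n"
  assumes "prob_space M"
    and "CARD('n) \<ge> 2"
    and "Y \<in> borel_measurable M"
    and "integrable M (\<lambda>\<omega>. (Y \<omega>)\<^sup>2)"
    and "prob_space.indep_vars M (\<lambda>_. borel) (\<lambda>(t, i). X t i) ({1..} \<times> UNIV)"
    and "\<And>t i. t \<ge> 1 \<Longrightarrow> distr M borel (X t i) = distr M borel Y"
    and "stochastic_matrix A"
  shows "(\<forall>t\<ge>1. prob_space.expectation M
             (\<lambda>\<omega>. (norm (theta_hat A X t \<omega> - (\<chi> i. prob_space.expectation M Y)))\<^sup>2)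
           \<le> real CARD('n) / real t * prob_space.expectation M
             (\<lambda>\<omega>. (norm (obs_vec X 1 \<omega> - (\<chi> i. prob_space.expectation M Y)))\<^sup>2))
    \<and> (\<lambda>t. prob_space.expectation M
             (\<lambda>\<omega>. (norm (theta_hat A X t \<omega> - (\<chi> i. prob_space.expectation M Y)))\<^sup>2))
        \<longlonglongrightarrow> 0
    \<and> (\<forall>i. \<forall>\<epsilon>>0. (\<lambda>t. measure M {\<omega> \<in> space M.
             \<bar>theta_hat A X t \<omega> $ i - prob_space.expectation M Y\<bar> > \<epsilon>}) \<longlonglongrightarrow> 0)"
proof -
  interpret prob_space M by fact
  define \<theta> where "\<theta> = expectation Y"
  define V where "V = variance Y"
  interpret consensus_estimator M X \<theta> V A
    unfolding \<theta>_def V_def using assms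
    by (intro consensus_estimator.intro consensus_estimator_axioms.intro iid_centered_orthogonal_noise)
  let ?N = "real CARD('n)"
  have "1 \<le> ?N" "0 \<le> ?N * V"
    using assms(2) second_moment_nonneg by simp_all
  then have "?N * V \<le> ?N * (?N * V)"
    using mult_right_mono[of 1 ?N "?N * V"] by simp
  then have N_bound: "?N * V / t \<le> ?N / t * (?N * V)" for t :: nat
    by (simp add: divide_right_mono)
  have mean_square: "expectation (\<lambda>\<omega>. (norm (theta_hat A X t \<omega> - (\<chi> i. \<theta>)))\<^sup>2)
      \<le> ?N / t * expectation (\<lambda>\<omega>. (norm (obs_vec X 1 \<omega> - (\<chi> i. \<theta>)))\<^sup>2)" if "1 \<le> t" for t
    using order_trans[OF theta_hat_mean_square[OF that] N_bound]
    unfolding obs_vec_centered_mean_square .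
  have "(\<lambda>t. expectation (\<lambda>\<omega>. (norm (theta_hat A X t \<omega> - (\<chi> i. \<theta>)))\<^sup>2)) \<longlonglongrightarrow> 0"
    by (rule tendsto_zero_of_le_const_over_n[OF _ theta_hat_mean_square]) simp
  moreover have "(\<lambda>t. measure M {\<omega> \<in> space M. \<bar>theta_hat A X t \<omega> $ i - \<theta>\<bar> > \<epsilon>}) \<longlonglongrightarrow> 0"
    if "0 < \<epsilon>" for i \<epsilon>
    using theta_hat_deviation[OF _ that]
    by (intro tendsto_zero_of_le_const_over_n[where c = "V / \<epsilon>\<^sup>2"]) (simp_all add: mult.commute)
  ultimately show ?thesis
    using mean_square unfolding \<theta>_def by blast
qed

end
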